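(* For $n \in \mathbb{N}_0$ let $\lambda(n)$ denote the number of leading $1$s in the binary expansion of $n$ (so $\lambda(0)=0$, and e.g. $\lambda(123)=\lambda([1111011]_2)=4$). Define $f\colon\mathbb{N}_0\to\{0,1\}$ by $f(n)=1$ if $\lambda(n)$ is prime and $f(n)=0$ otherwise. Then $f$ is asymptotically $2$-automatic but there is no $2$-automatic sequence $\tilde f\colon\mathbb{N}_0\to\{0,1\}$ with $f\simeq\tilde f$.
   Context: $\mathbb{N}_0=\{0,1,2,\dots\}$. A property holds for almost all $n\in\mathbb{N}_0$ if the set of $n$ where it fails has upper density $\limsup_{N\to\infty}|\cdot\cap\{0,\dots,N-1\}|/N$ equal to $0$. Sequences $f,g$ are asymptotically equal, $f\simeq g$, if $f(n)=g(n)$ for almost all $n$. The $k$-kernel of $f$ is $\mathcal{N}_k(f) = \{ n \mapsto f(k^\alpha n + r) : \alpha, r \in \mathbb{N}_0,\ r < k^\alpha\}$; $f$ is $k$-automatic if $\mathcal{N}_k(f)$ is finite, and asymptotically $k$-automatic if $\mathcal{N}_k(f)/{\simeq}$ is finite. *)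

theory Defs
  imports "HOL-Analysis.Analysis" "HOL-Library.Liminf_Limsup" "HOL-Computational_Algebra.Primes"
begin

fun bin_digits :: "nat \<Rightarrow> nat list" where
  "bin_digits n = (if n = 0 then [] else bin_digits (n div 2) @ [n mod 2])"

declare bin_digits.simps [simp del]

definition leading_ones :: "nat \<Rightarrow> nat" where
  "leading_ones n = length (takeWhile (\<lambda>d. d = 1) (bin_digits n))"

definition upper_density :: "nat set \<Rightarrow> ereal" where
  "upper_density A = limsup (\<lambda>N. ereal (real (card (A \<inter> {..<N})) / real N))"

definition almost_all :: "(nat \<Rightarrow> bool) \<Rightarrow> bool" where
  "almost_all P \<longleftrightarrow> upper_density {n. \<not> P n} = 0"

definition asymp_eq :: "(nat \<Rightarrow> 'a) \<Rightarrow> (nat \<Rightarrow> 'a) \<Rightarrow> bool" where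
  "asymp_eq f g \<longleftrightarrow> almost_all (\<lambda>n. f n = g n)"

definition kernel :: "nat \<Rightarrow> (nat \<Rightarrow> 'a) \<Rightarrow> (nat \<Rightarrow> 'a) set" where
  "kernel k f = {(\<lambda>n. f (k ^ a * n + r)) | a r. r < k ^ a}"

definition automatic :: "nat \<Rightarrow> (nat \<Rightarrow> 'a) \<Rightarrow> bool" where
  "automatic k f \<longleftrightarrow> finite (kernel k f)"

definition asymp_automatic :: "nat \<Rightarrow> (nat \<Rightarrow> 'a) \<Rightarrow> bool" where
  "asymp_automatic k f \<longleftrightarrow>
     finite ((\<lambda>g. {h \<in> kernel k f. asymp_eq g h}) ` kernel k f)"

end

theory Submission
  imports Defs "HOL-Real_Asymp.Real_Asymp"
begin

(* Appending binary digits to n does not change lambda(n) unless n = 2^k - 1 is a repunit, and the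
   repunits have density zero; hence all members of the 2-kernel of f agree almost everywhere.

   Conversely, let g be 2-automatic and call u, v equivalent if every kernel sequence of g takes
   the same value at u and v.  Finitely many kernel sequences with finitely many values give finitely
   many classes, and appending a digit respects the equivalence; since appending the digit 1 maps
   2^k - 1 to 2^(k+1) - 1, the classes of the repunits are eventually periodic with some period d.
   For a prime p beyond the preperiod, 2^p - 1 and 2^q - 1 with q = p(1 + d) composite are then
   equivalent.  Appending 0 followed by any a digits to both gives two arguments on which g agrees
   but f does not (lambda = p versus q), so f differs from g on at least 2^a numbers below
   2^(a+1) 2^q, a set of positive upper density. *)

lemma bin_digits_0 [simp]: "bin_digits 0 = []"
  by (simp add: bin_digits.simps)

lemma bin_digits_pos: "n > 0 \<Longrightarrow> bin_digits n = bin_digits (n div 2) @ [n mod 2]"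
  by (simp add: bin_digits.simps)

lemma bin_digits_snoc:
  assumes "b < 2" "2 * m + b > 0"
  shows "bin_digits (2 * m + b) = bin_digits m @ [b]"
  using bin_digits_pos[OF assms(2)] assms(1) by simp

lemma bin_digits_shift:
  assumes "n > 0" "r < 2 ^ a"
  shows "\<exists>ds. bin_digits (2 ^ a * n + r) = bin_digits n @ ds"
  using assms(2)
proof (induction a arbitrary: r)
  case 0
  then show ?case by simp
next
  case (Suc a)
  have "r div 2 < 2 ^ a"
    using Suc.prems by (simp add: less_mult_imp_div_less mult.commute)
  then obtain ds where ds: "bin_digits (2 ^ a * n + r div 2) = bin_digits n @ ds"
    using Suc.IH by blast
  have split: "2 ^ Suc a * n + r = 2 * (2 ^ a * n + r div 2) + r mod 2"
    by simp
  have "bin_digits (2 ^ Suc a * n + r) = bin_digits (2 ^ a * n + r div 2) @ [r mod 2]"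
    unfolding split by (rule bin_digits_snoc) (use assms(1) in auto)
  then show ?case
    using ds by simp
qed

lemma double_repunit_add_1: "2 * (2 ^ k - 1) + 1 = (2::nat) ^ Suc k - 1"
proof -
  have "(1::nat) \<le> 2 ^ k"
    by simp
  then show ?thesis
    by (simp only: power_Suc)
qed

lemma bin_digits_repunit: "bin_digits (2 ^ k - 1) = replicate k 1"
proof (induction k)
  case 0
  then show ?case by simp
next
  case (Suc k)
  have "bin_digits (2 ^ Suc k - 1) = bin_digits (2 ^ k - 1) @ [1]"
    using bin_digits_snoc[of 1 "2 ^ k - 1"] double_repunit_add_1[of k] by simp
  then show ?case
    using Suc.IH by (simp add: replicate_append_same)
qed

lemma repunit_if_no_zero_digit:
  "0 \<notin> set (bin_digits n) \<Longrightarrow> n = 2 ^ length (bin_digits n) - 1"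
proof (induction n rule: bin_digits.induct)
  case (1 n)
  show ?case
  proof (cases "n = 0")
    case False
    then have digits: "bin_digits n = bin_digits (n div 2) @ [n mod 2]"
      by (simp add: bin_digits_pos)
    with "1.prems" have "n mod 2 = 1" "0 \<notin> set (bin_digits (n div 2))"
      by auto
    with "1.IH" False have "n = 2 * (2 ^ length (bin_digits (n div 2)) - 1) + 1"
      by presburger
    then show ?thesis
      using digits double_repunit_add_1 by simp
  qed simp
qed

lemma leading_ones_shift:
  assumes "n \<notin> range (\<lambda>k. 2 ^ k - 1)" "r < 2 ^ a"
  shows "leading_ones (2 ^ a * n + r) = leading_ones n"
proof -
  have zero: "0 \<in> set (bin_digits n)"
    using repunit_if_no_zero_digit assms(1) by blast
  then have "n > 0"
    by (cases "n = 0") auto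
  then obtain ds where "bin_digits (2 ^ a * n + r) = bin_digits n @ ds"
    using bin_digits_shift assms(2) by blast
  then show ?thesis
    using zero by (simp add: leading_ones_def takeWhile_append1)
qed

lemma leading_ones_after_repunit:
  assumes "k > 0" "r < 2 ^ a"
  shows "leading_ones (2 ^ a * (2 * (2 ^ k - 1)) + r) = k"
proof -
  have pos: "(2::nat) ^ k - 1 > 0"
    using assms(1) one_less_power[of "2::nat" k] by simp
  obtain ds where "bin_digits (2 ^ a * (2 * (2 ^ k - 1)) + r) = bin_digits (2 * (2 ^ k - 1) + 0) @ ds"
    using bin_digits_shift[of "2 * (2 ^ k - 1)" r a] assms pos by auto
  also have "\<dots> = replicate k 1 @ 0 # ds"
    using bin_digits_snoc[of 0 "2 ^ k - 1"] bin_digits_repunit[of k] pos by simp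
  finally have "bin_digits (2 ^ a * (2 * (2 ^ k - 1)) + r) = replicate k 1 @ 0 # ds" .
  moreover have "takeWhile (\<lambda>d. d = 1) (replicate k (1::nat) @ 0 # ds) = replicate k 1"
    by (induction k) auto
  ultimately show ?thesis
    by (simp add: leading_ones_def)
qed

lemma upper_density_nonneg: "0 \<le> upper_density A"
  unfolding upper_density_def by (intro le_Limsup) auto

lemma upper_density_mono:
  assumes "A \<subseteq> B"
  shows "upper_density A \<le> upper_density B"
  unfolding upper_density_def
proof (intro Limsup_mono always_eventually allI)
  fix N
  have "card (A \<inter> {..<N}) \<le> card (B \<inter> {..<N})"
    using assms by (intro card_mono) auto
  then show "ereal (real (card (A \<inter> {..<N})) / real N) \<le> ereal (real (card (B \<inter> {..<N})) / real N)"
    by (simp add: divide_right_mono)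
qed

lemma upper_density_eq_0_if_tendsto:
  assumes "(\<lambda>N. real (card (A \<inter> {..<N})) / real N) \<longlonglongrightarrow> 0"
  shows "upper_density A = 0"
proof -
  have "(\<lambda>N. ereal (real (card (A \<inter> {..<N})) / real N)) \<longlonglongrightarrow> ereal 0"
    using assms by (rule tendsto_ereal)
  then show ?thesis
    unfolding upper_density_def zero_ereal_def by (intro lim_imp_Limsup) auto
qed

lemma upper_density_ge_if_subseq:
  fixes N :: "nat \<Rightarrow> nat"
  assumes "strict_mono N" "\<And>a. \<delta> * real (N a) \<le> real (card (A \<inter> {..<N a}))"
  shows "ereal \<delta> \<le> upper_density A"
proof -
  let ?ratio = "\<lambda>N. ereal (real (card (A \<inter> {..<N})) / real N)"
  have "ereal \<delta> \<le> ?ratio (N a)" if "a > 0" for a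
  proof -
    have "N a > 0"
      using strict_monoD[OF assms(1) that] by simp
    then show ?thesis
      using assms(2)[of a] by (simp add: pos_le_divide_eq)
  qed
  then have "ereal \<delta> \<le> limsup (?ratio \<circ> N)"
    by (intro le_Limsup) (auto simp: eventually_sequentially intro!: exI[of _ 1])
  also have "\<dots> \<le> limsup ?ratio"
    by (rule limsup_subseq_mono[OF assms(1)])
  finally show ?thesis
    unfolding upper_density_def .
qed

lemma card_repunits_less:
  assumes "N > 0"
  shows "real (card (range (\<lambda>k. 2 ^ k - 1 :: nat) \<inter> {..<N})) \<le> 1 + log 2 N"
proof -
  define M where "M = nat \<lfloor>log 2 N\<rfloor>"
  have "range (\<lambda>k. 2 ^ k - 1) \<inter> {..<N} \<subseteq> (\<lambda>k. 2 ^ k - 1) ` {..M}"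
  proof
    fix x assume "x \<in> range (\<lambda>k. 2 ^ k - 1) \<inter> {..<N}"
    then obtain k where k: "x = 2 ^ k - 1" "2 ^ k \<le> N"
      by auto
    from k(2) have "real k \<le> log 2 N"
      by (rule le_log2_of_power)
    then have "k \<le> M"
      unfolding M_def by linarith
    with k show "x \<in> (\<lambda>k. 2 ^ k - 1) ` {..M}"
      by auto
  qed
  then have "card (range (\<lambda>k. 2 ^ k - 1 :: nat) \<inter> {..<N}) \<le> card ((\<lambda>k. 2 ^ k - 1 :: nat) ` {..M})"
    by (intro card_mono) auto
  also have "\<dots> \<le> card {..M}"
    by (rule card_image_le) simp
  moreover have "real M \<le> log 2 N"
    unfolding M_def using assms by simp
  ultimately show ?thesis
    by simp
qed

lemma upper_density_repunits: "upper_density (range (\<lambda>k. 2 ^ k - 1 :: nat)) = 0"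
proof (rule upper_density_eq_0_if_tendsto, rule tendsto_sandwich[OF _ _ tendsto_const])
  let ?R = "range (\<lambda>k. 2 ^ k - 1 :: nat)"
  show "\<forall>\<^sub>F N in sequentially. 0 \<le> real (card (?R \<inter> {..<N})) / real N"
    by simp
  show "\<forall>\<^sub>F N in sequentially. real (card (?R \<inter> {..<N})) / real N \<le> (1 + log 2 N) / N"
    using card_repunits_less
    by (auto simp: eventually_sequentially divide_right_mono intro!: exI[of _ 1])
  show "(\<lambda>N. (1 + log 2 (real N)) / real N) \<longlonglongrightarrow> 0"
    by real_asymp
qed

lemma asymp_eqI:
  assumes "upper_density Z = 0" "\<And>n. n \<notin> Z \<Longrightarrow> f n = g n"
  shows "asymp_eq f g"
proof -
  have "upper_density {n. f n \<noteq> g n} \<le> upper_density Z"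
    using assms(2) by (intro upper_density_mono) auto
  then show ?thesis
    unfolding asymp_eq_def almost_all_def
    using assms(1) upper_density_nonneg by (simp add: order_antisym)
qed

lemma card_hits_in_two_blocks:
  fixes c u v :: nat
  assumes "u < v" "\<And>r. r < c \<Longrightarrow> c * u + r \<in> E \<or> c * v + r \<in> E"
  shows "c \<le> card (E \<inter> {..<c * (v + 1)})"
proof -
  define hit where "hit r = (if c * u + r \<in> E then c * u + r else c * v + r)" for r
  have gap: "c * u + c \<le> c * v"
    using mult_le_mono2[of "Suc u" v c] assms(1) by simp
  have "inj_on hit {..<c}"
    using gap by (intro inj_onI) (auto simp: hit_def split: if_splits)
  moreover have "hit ` {..<c} \<subseteq> E \<inter> {..<c * (v + 1)}"
    using assms gap by (auto simp: hit_def)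
  ultimately have "card {..<c} \<le> card (E \<inter> {..<c * (v + 1)})"
    by (intro card_inj_on_le) auto
  then show ?thesis
    by simp
qed

lemma asymp_automatic_if_kernel_asymp_eq:
  assumes "\<And>h h'. h \<in> kernel k f \<Longrightarrow> h' \<in> kernel k f \<Longrightarrow> asymp_eq h h'"
  shows "asymp_automatic k f"
proof -
  have "(\<lambda>h. {h' \<in> kernel k f. asymp_eq h h'}) ` kernel k f \<subseteq> {kernel k f}"
    using assms by auto
  then show ?thesis
    unfolding asymp_automatic_def by (rule finite_subset) simp
qed

lemma asymp_automatic_leading_ones: "asymp_automatic 2 (\<lambda>n. F (leading_ones n))"
proof (rule asymp_automatic_if_kernel_asymp_eq)
  fix h h' assume "h \<in> kernel 2 (\<lambda>n. F (leading_ones n))" "h' \<in> kernel 2 (\<lambda>n. F (leading_ones n))"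
  then obtain a r b s where
    "h = (\<lambda>n. F (leading_ones (2 ^ a * n + r)))" "r < 2 ^ a"
    "h' = (\<lambda>n. F (leading_ones (2 ^ b * n + s)))" "s < 2 ^ b"
    unfolding kernel_def by blast
  then show "asymp_eq h h'"
    by (intro asymp_eqI[OF upper_density_repunits]) (simp add: leading_ones_shift)
qed

(* Equivalence of u and v as prefixes (most significant digits first) for an automaton reading g. *)
definition kernel_equiv :: "nat \<Rightarrow> (nat \<Rightarrow> 'a) \<Rightarrow> nat \<Rightarrow> nat \<Rightarrow> bool" where
  "kernel_equiv k g u v \<longleftrightarrow> (\<forall>h \<in> kernel k g. h u = h v)"

lemma kernel_memI: "r < k ^ a \<Longrightarrow> (\<lambda>n. g (k ^ a * n + r)) \<in> kernel k g"
  unfolding kernel_def by blast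

lemma kernel_equivD:
  "kernel_equiv k g u v \<Longrightarrow> r < k ^ a \<Longrightarrow> g (k ^ a * u + r) = g (k ^ a * v + r)"
  using kernel_memI unfolding kernel_equiv_def by fastforce

lemma kernel_equiv_refl: "kernel_equiv k g u u"
  by (simp add: kernel_equiv_def)

lemma kernel_equiv_sym: "kernel_equiv k g u v \<Longrightarrow> kernel_equiv k g v u"
  unfolding kernel_equiv_def by auto

lemma kernel_equiv_trans:
  "kernel_equiv k g u v \<Longrightarrow> kernel_equiv k g v w \<Longrightarrow> kernel_equiv k g u w"
  unfolding kernel_equiv_def by auto

lemma kernel_equiv_append_digit:
  assumes "kernel_equiv k g u v" "d < k"
  shows "kernel_equiv k g (k * u + d) (k * v + d)"
  unfolding kernel_equiv_def
proof
  fix h assume "h \<in> kernel k g"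
  then obtain a r where h: "h = (\<lambda>n. g (k ^ a * n + r))" "r < k ^ a"
    unfolding kernel_def by blast
  have "k ^ a * d + r < k ^ a * (d + 1)"
    using h(2) by simp
  also have "\<dots> \<le> k ^ a * k"
    using assms(2) by (intro mult_le_mono2) simp
  also have "\<dots> = k ^ Suc a"
    by (rule power_Suc2[symmetric])
  finally have "g (k ^ Suc a * u + (k ^ a * d + r)) = g (k ^ Suc a * v + (k ^ a * d + r))"
    by (rule kernel_equivD[OF assms(1)])
  then show "h (k * u + d) = h (k * v + d)"
    unfolding h by (simp add: algebra_simps)
qed

lemma automatic_imp_finite_range:
  assumes "automatic k g" "k \<ge> 2"
  shows "finite (range g)"
proof -
  have "range g \<subseteq> (\<lambda>h. h 0) ` kernel k g"
  proof
    fix x assume "x \<in> range g"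
    then obtain r where r: "x = g r"
      by blast
    have "r < 2 ^ r"
      by simp
    also have "\<dots> \<le> k ^ r"
      using assms(2) by (simp add: power_mono)
    finally have "(\<lambda>n. g (k ^ r * n + r)) \<in> kernel k g"
      by (rule kernel_memI)
    then show "x \<in> (\<lambda>h. h 0) ` kernel k g"
      using r by (simp add: rev_image_eqI)
  qed
  then show ?thesis
    using assms(1) finite_surj unfolding automatic_def by blast
qed

lemma kernel_values: "h \<in> kernel k g \<Longrightarrow> h n \<in> range g"
  unfolding kernel_def by auto

lemma automatic_imp_kernel_equiv_pair:
  fixes x :: "nat \<Rightarrow> nat"
  assumes "automatic k g" "k \<ge> 2"
  shows "\<exists>i j. i < j \<and> kernel_equiv k g (x i) (x j)"
proof -
  define profile where "profile i = restrict (\<lambda>h. h (x i)) (kernel k g)" for i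
  have "profile i \<in> (\<Pi>\<^sub>E h \<in> kernel k g. range g)" for i
    unfolding profile_def restrict_PiE_iff using kernel_values by blast
  then have "range profile \<subseteq> (\<Pi>\<^sub>E h \<in> kernel k g. range g)"
    by blast
  moreover have "finite (\<Pi>\<^sub>E h \<in> kernel k g. range g)"
    using assms automatic_imp_finite_range[OF assms] unfolding automatic_def
    by (intro finite_PiE)
  ultimately have "finite (range profile)"
    by (rule finite_subset)
  have "\<not> inj profile"
  proof
    assume "inj profile"
    with \<open>finite (range profile)\<close> have "finite (UNIV :: nat set)"
      by (rule finite_imageD)
    then show False
      by simp
  qed
  then obtain i j where "i \<noteq> j" and same_profile: "profile i = profile j"
    unfolding inj_def by blast
  have "h (x i) = h (x j)" if "h \<in> kernel k g" for h
    using fun_cong[OF same_profile, of h] that unfolding profile_def by simp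
  then have "kernel_equiv k g (x i) (x j)"
    unfolding kernel_equiv_def by blast
  with \<open>i \<noteq> j\<close> show ?thesis
    by (metis kernel_equiv_sym linorder_neqE_nat)
qed

lemma kernel_equiv_repunits_shift:
  assumes "kernel_equiv 2 g (2 ^ i - 1) (2 ^ j - 1)"
  shows "kernel_equiv 2 g (2 ^ (i + m) - 1) (2 ^ (j + m) - 1)"
proof (induction m)
  case 0
  then show ?case
    using assms by simp
next
  case (Suc m)
  have "kernel_equiv 2 g (2 * (2 ^ (i + m) - 1) + 1) (2 * (2 ^ (j + m) - 1) + 1)"
    by (rule kernel_equiv_append_digit[OF Suc]) simp
  then show ?case
    unfolding double_repunit_add_1 by simp
qed

lemma kernel_equiv_repunits_periodic:
  assumes "kernel_equiv 2 g (2 ^ i - 1) (2 ^ (i + d) - 1)" "i \<le> n"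
  shows "kernel_equiv 2 g (2 ^ n - 1) (2 ^ (n + t * d) - 1)"
proof (induction t)
  case 0
  then show ?case
    by (simp add: kernel_equiv_refl)
next
  case (Suc t)
  define m where "m = n + t * d - i"
  have exponents: "i + m = n + t * d" "i + d + m = n + t * d + d"
    using assms(2) unfolding m_def by simp_all
  have "kernel_equiv 2 g (2 ^ (n + t * d) - 1) (2 ^ (n + t * d + d) - 1)"
    using kernel_equiv_repunits_shift[OF assms(1), of m] unfolding exponents .
  with Suc.IH have "kernel_equiv 2 g (2 ^ n - 1) (2 ^ (n + t * d + d) - 1)"
    by (rule kernel_equiv_trans)
  then show ?case
    by (simp add: add_ac)
qed

lemma not_asymp_eq_if_kernel_equiv_separated:
  assumes "kernel_equiv k g u v" "u < v" "k \<ge> 2"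
    and separated: "\<And>a r. r < k ^ a \<Longrightarrow> f (k ^ a * u + r) \<noteq> f (k ^ a * v + r)"
  shows "\<not> asymp_eq f g"
proof
  define E where "E = {n. f n \<noteq> g n}"
  assume "asymp_eq f g"
  then have "upper_density E = 0"
    unfolding asymp_eq_def almost_all_def E_def .
  have "ereal (1 / (v + 1)) \<le> upper_density E"
  proof (rule upper_density_ge_if_subseq)
    show "strict_mono (\<lambda>a. k ^ a * (v + 1))"
      using assms(3) by (intro strict_monoI mult_strict_right_mono power_strict_increasing) auto
    fix a
    have "k ^ a \<le> card (E \<inter> {..<k ^ a * (v + 1)})"
    proof (rule card_hits_in_two_blocks[OF assms(2)])
      fix r assume "r < k ^ a"
      with separated kernel_equivD[OF assms(1)]
      show "k ^ a * u + r \<in> E \<or> k ^ a * v + r \<in> E"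
        unfolding E_def by fastforce
    qed
    moreover have "1 / (v + 1) * real (k ^ a * (v + 1)) = real (k ^ a)"
      by (simp add: field_simps)
    ultimately show "1 / (v + 1) * real (k ^ a * (v + 1)) \<le> real (card (E \<inter> {..<k ^ a * (v + 1)}))"
      by linarith
  qed
  moreover have "ereal (1 / (v + 1)) > 0"
    by simp
  ultimately show False
    using \<open>upper_density E = 0\<close> by (metis leD)
qed

lemma automatic_obtains_repunits_prime_composite:
  assumes "automatic 2 g"
  obtains p q where "prime p" "\<not> prime q" "p < q" "kernel_equiv 2 g (2 ^ p - 1) (2 ^ q - 1)"
proof -
  obtain i j where "i < j" and ij: "kernel_equiv 2 g (2 ^ i - 1) (2 ^ j - 1)"
    using automatic_imp_kernel_equiv_pair[OF assms, of "\<lambda>k. 2 ^ k - 1"] by auto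
  define d where "d = j - i"
  obtain p where "prime p" "i < p"
    using bigger_prime by blast
  define q where "q = p + p * d"
  have "d > 0" "p > 1"
    using \<open>i < j\<close> \<open>prime p\<close> prime_gt_1_nat unfolding d_def by auto
  then have "p < q"
    unfolding q_def by simp
  have "\<not> prime q"
  proof
    assume "prime q"
    then have "prime (p * (1 + d))"
      unfolding q_def by (simp add: algebra_simps)
    then have "p = 1 \<or> 1 + d = 1"
      by (rule prime_product)
    with \<open>d > 0\<close> \<open>p > 1\<close> show False
      by simp
  qed
  moreover have "kernel_equiv 2 g (2 ^ p - 1) (2 ^ q - 1)"
    using kernel_equiv_repunits_periodic[of g i d p p] ij \<open>i < j\<close> \<open>i < p\<close>
    unfolding d_def q_def by simp
  ultimately show thesis
    using that \<open>prime p\<close> \<open>p < q\<close> by blast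
qed

lemma not_asymp_eq_automatic:
  fixes F :: "bool \<Rightarrow> 'a" and g :: "nat \<Rightarrow> 'a"
  assumes "F True \<noteq> F False" "automatic 2 g"
  shows "\<not> asymp_eq (\<lambda>n. F (prime (leading_ones n))) g"
proof -
  obtain p q where "prime p" "\<not> prime q" "p < q" and pq: "kernel_equiv 2 g (2 ^ p - 1) (2 ^ q - 1)"
    using automatic_obtains_repunits_prime_composite[OF assms(2)] .
  then have "p > 0"
    using prime_gt_0_nat by blast
  show ?thesis
  proof (rule not_asymp_eq_if_kernel_equiv_separated)
    show "kernel_equiv 2 g (2 * (2 ^ p - 1)) (2 * (2 ^ q - 1))"
      using kernel_equiv_append_digit[OF pq, of 0] by simp
    show "2 * (2 ^ p - 1) < 2 * ((2::nat) ^ q - 1)"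
      using \<open>p < q\<close> one_le_power[of "2::nat" p] power_strict_increasing[of p q "2::nat"]
      by linarith
    fix a r :: nat assume "r < 2 ^ a"
    with \<open>p > 0\<close> \<open>p < q\<close> have "leading_ones (2 ^ a * (2 * (2 ^ p - 1)) + r) = p"
      "leading_ones (2 ^ a * (2 * (2 ^ q - 1)) + r) = q"
      by (intro leading_ones_after_repunit; simp)+
    with assms(1) \<open>prime p\<close> \<open>\<not> prime q\<close>
    show "F (prime (leading_ones (2 ^ a * (2 * (2 ^ p - 1)) + r)))
      \<noteq> F (prime (leading_ones (2 ^ a * (2 * (2 ^ q - 1)) + r)))"
      by simp
  qed simp
qed

theorem proposition3p1:
  fixes f :: "nat \<Rightarrow> nat"
  assumes "\<And>n. f n = (if prime (leading_ones n) then 1 else 0)"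
  shows "asymp_automatic 2 f \<and>
         \<not> (\<exists>g :: nat \<Rightarrow> nat. (\<forall>n. g n \<in> {0, 1}) \<and> automatic 2 g \<and> asymp_eq f g)"
proof -
  have f: "f = (\<lambda>n. if prime (leading_ones n) then 1 else 0)"
    using assms by auto
  have "asymp_automatic 2 f"
    unfolding f using asymp_automatic_leading_ones[of "\<lambda>l. if prime l then 1 else 0"] by simp
  (* the values of g need not be restricted to {0, 1} *)
  moreover have "\<not> asymp_eq f g" if "automatic 2 g" for g
    unfolding f using not_asymp_eq_automatic[of "\<lambda>b. if b then 1 else (0::nat)" g] that by simp
  ultimately show ?thesis
    by blast
qed

end
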